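(* Consider the packet spreading algorithm described in the context with $N=2$ and $K_1\ge K_2$. For every iteration $k\in\{0,1,\dots,K-1\}$, letting $i=m_k$ be the source selected in iteration $k$ and $j$ the other source (i.e. $j=3-i$), we have $$\tilde Q_j^{k+1}=\frac{x_j^k+1}{K_j}-\frac{x_i^k}{K_i}.$$
   Context: Packet spreading algorithm: Let $N\ge 2$, let $K_1,\dots,K_N$ be positive integers and $K=\sum_{n=1}^N K_n$. The algorithm runs iterations $k=0,1,\dots,K-1$ and maintains deficit counters $B_n^k$, $1\le n\le N$, with $B_n^0=0$ for all $n$. In iteration $k$, define the quantums $Q_n^k=\frac{(1-B_n^k)K}{K_n}$; select a source $m_k\in\arg\min_{1\le n\le N} Q_n^k$ (ties broken arbitrarily); let $Q=Q_{m_k}^k$; set $B_n^{k+1}=B_n^k+Q\frac{K_n}{K}$ for $n\neq m_k$ and $B_{m_k}^{k+1}=0$; and set the $k$-th entry of the output pattern to $P(k)=m_k$. Normalized quantums: $\tilde Q_n^k=Q_n^k/K=(1-B_n^k)/K_n$. For $0\le k\le K-1$, $x_n^k$ denotes the number of indices $k'\in\{0,\dots,k\}$ with $m_{k'}=n$, i.e. the number of source-$n$ instances inserted into the pattern after iteration $k$. *)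

theory Defs
  imports Complex_Main
begin

text \<open>Sources are indexed by 1..N; Kn n is the (positive integer) count K_n of source n.
  A run of the packet spreading algorithm is given by the sequence of selected sources m
  and the deficit counters B k n (= B_n^k); ties may be broken arbitrarily, so a run is
  any pair (m, B) satisfying the defining rules for iterations k = 0..K-1.\<close>

definition total_K :: "nat \<Rightarrow> (nat \<Rightarrow> nat) \<Rightarrow> nat" where
  "total_K N Kn = (\<Sum>n=1..N. Kn n)"

definition quantum :: "nat \<Rightarrow> (nat \<Rightarrow> nat) \<Rightarrow> (nat \<Rightarrow> nat \<Rightarrow> real) \<Rightarrow> nat \<Rightarrow> nat \<Rightarrow> real" where
  "quantum N Kn B k n = (1 - B k n) * real (total_K N Kn) / real (Kn n)"

definition norm_quantum :: "nat \<Rightarrow> (nat \<Rightarrow> nat) \<Rightarrow> (nat \<Rightarrow> nat \<Rightarrow> real) \<Rightarrow> nat \<Rightarrow> nat \<Rightarrow> real" where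
  "norm_quantum N Kn B k n = quantum N Kn B k n / real (total_K N Kn)"

definition spreading_run ::
  "nat \<Rightarrow> (nat \<Rightarrow> nat) \<Rightarrow> (nat \<Rightarrow> nat) \<Rightarrow> (nat \<Rightarrow> nat \<Rightarrow> real) \<Rightarrow> bool" where
  "spreading_run N Kn m B \<longleftrightarrow>
     (\<forall>n\<in>{1..N}. B 0 n = 0) \<and>
     (\<forall>k < total_K N Kn.
        m k \<in> {1..N} \<and>
        (\<forall>n\<in>{1..N}. quantum N Kn B k (m k) \<le> quantum N Kn B k n) \<and>
        B (Suc k) (m k) = 0 \<and>
        (\<forall>n\<in>{1..N}. n \<noteq> m k \<longrightarrow>
           B (Suc k) n = B k n + quantum N Kn B k (m k) * real (Kn n) / real (total_K N Kn)))"

definition inserted :: "(nat \<Rightarrow> nat) \<Rightarrow> nat \<Rightarrow> nat \<Rightarrow> nat" where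
  "inserted m n k = card {k'\<in>{0..k}. m k' = n}"

end

theory Submission
  imports Defs
begin

text \<open>For any number of sources the normalized quantums satisfy the invariant
  \<open>Q\<^sub>n\<^sup>k / K = (c\<^sub>n\<^sup>k + 1) / K\<^sub>n - c\<^sup>k\<close>, where \<open>c\<^sub>n\<^sup>k\<close> counts the selections of source \<open>n\<close> before
  iteration \<open>k\<close> and the offset \<open>c\<^sup>k\<close> is common to all sources: the selected source is reset to
  \<open>1 / K\<^sub>m\<close>, and every other normalized quantum drops by the selected one. Hence in iteration
  \<open>k\<close> the offset cancels in the difference of the quantums of the other source \<open>j\<close> and of
  the selected source \<open>i\<close>, and counting iteration \<open>k\<close> itself turns \<open>c\<^sub>i\<^sup>k + 1\<close> into \<open>x\<^sub>i\<^sup>k\<close>.\<close>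

definition count_before :: "(nat \<Rightarrow> nat) \<Rightarrow> nat \<Rightarrow> nat \<Rightarrow> nat" where
  "count_before m n k = card {k'. k' < k \<and> m k' = n}"

lemma count_before_0 [simp]: "count_before m n 0 = 0"
  by (simp add: count_before_def)

lemma count_before_Suc:
  "count_before m n (Suc k) = count_before m n k + (if m k = n then 1 else 0)"
proof -
  have "{k'. k' < Suc k \<and> m k' = n} =
        (if m k = n then insert k {k'. k' < k \<and> m k' = n} else {k'. k' < k \<and> m k' = n})"
    by (auto simp: less_Suc_eq)
  then show ?thesis
    by (simp add: count_before_def)
qed

lemma inserted_eq_count_before: "inserted m n k = count_before m n (Suc k)"
proof -
  have "{k'\<in>{0..k}. m k' = n} = {k'. k' < Suc k \<and> m k' = n}"
    by auto
  then show ?thesis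
    by (simp add: inserted_def count_before_def)
qed

lemma norm_quantum_eq:
  "0 < total_K N Kn \<Longrightarrow> norm_quantum N Kn B k n = (1 - B k n) / real (Kn n)"
  by (simp add: norm_quantum_def quantum_def)

lemma spreading_run_selected:
  "spreading_run N Kn m B \<Longrightarrow> k < total_K N Kn \<Longrightarrow> m k \<in> {1..N}"
  by (simp add: spreading_run_def)

lemma norm_quantum_Suc_selected:
  assumes "spreading_run N Kn m B" and "k < total_K N Kn"
  shows "norm_quantum N Kn B (Suc k) (m k) = 1 / real (Kn (m k))"
  using assms by (simp add: spreading_run_def norm_quantum_eq)

lemma norm_quantum_Suc_other:
  assumes pos: "\<forall>n\<in>{1..N}. Kn n > 0"
    and run: "spreading_run N Kn m B"
    and k: "k < total_K N Kn"
    and n: "n \<in> {1..N}" "n \<noteq> m k"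
  shows "norm_quantum N Kn B (Suc k) n = norm_quantum N Kn B k n - norm_quantum N Kn B k (m k)"
proof -
  have K: "0 < total_K N Kn"
    using k by simp
  have Ki: "real (Kn (m k)) > 0" and Kj: "real (Kn n) > 0"
    using pos n spreading_run_selected[OF run k] by auto
  have "B (Suc k) n = B k n + quantum N Kn B k (m k) * real (Kn n) / real (total_K N Kn)"
    using run k n by (simp add: spreading_run_def)
  also have "\<dots> = B k n + (1 - B k (m k)) * real (Kn n) / real (Kn (m k))"
    using K Ki by (simp add: quantum_def field_simps)
  finally have B_Suc: "B (Suc k) n = B k n + (1 - B k (m k)) * real (Kn n) / real (Kn (m k))" .
  show ?thesis
    using K Ki Kj by (simp add: norm_quantum_eq B_Suc field_simps)
qed

lemma norm_quantum_common_offset: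
  assumes pos: "\<forall>n\<in>{1..N}. Kn n > 0"
    and run: "spreading_run N Kn m B"
    and K: "0 < total_K N Kn"
  shows "k \<le> total_K N Kn \<Longrightarrow>
    \<exists>c. \<forall>n\<in>{1..N}. norm_quantum N Kn B k n = (real (count_before m n k) + 1) / real (Kn n) - c"
proof (induction k)
  case 0
  show ?case
    using run K by (auto simp: norm_quantum_eq spreading_run_def)
next
  case (Suc k)
  then have k: "k < total_K N Kn"
    by simp
  from Suc obtain c where c: "\<forall>n\<in>{1..N}.
      norm_quantum N Kn B k n = (real (count_before m n k) + 1) / real (Kn n) - c"
    by auto
  have mk: "m k \<in> {1..N}"
    using spreading_run_selected[OF run k] .
  have Ki: "real (Kn (m k)) > 0"
    using pos mk by auto
  have "norm_quantum N Kn B (Suc k) n = (real (count_before m n (Suc k)) + 1) / real (Kn n)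
          - real (count_before m (m k) (Suc k)) / real (Kn (m k))" if n: "n \<in> {1..N}" for n
  proof (cases "n = m k")
    case True
    then show ?thesis
      using norm_quantum_Suc_selected[OF run k] Ki by (simp add: count_before_Suc field_simps)
  next
    case False
    have "norm_quantum N Kn B (Suc k) n = norm_quantum N Kn B k n - norm_quantum N Kn B k (m k)"
      using norm_quantum_Suc_other[OF pos run k n False] .
    also have "\<dots> = (real (count_before m n k) + 1) / real (Kn n)
                     - (real (count_before m (m k) k) + 1) / real (Kn (m k))"
      using c n mk by simp
    finally show ?thesis
      using False by (simp add: count_before_Suc add_divide_distrib)
  qed
  then show ?case
    by blast
qed

text \<open>The hypothesis \<open>Kn 1 \<ge> Kn 2\<close> only fixes the labelling of the sources; the identity
  does not need it.\<close>

theorem mainTheorem2: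
  fixes Kn :: "nat \<Rightarrow> nat" and m :: "nat \<Rightarrow> nat" and B :: "nat \<Rightarrow> nat \<Rightarrow> real"
  assumes pos: "\<forall>n\<in>{1..2}. Kn n > 0"
    and order: "Kn 1 \<ge> Kn 2"
    and run: "spreading_run 2 Kn m B"
    and k: "k < total_K 2 Kn"
  shows "norm_quantum 2 Kn B (Suc k) (3 - m k) =
           (real (inserted m (3 - m k) k) + 1) / real (Kn (3 - m k))
           - real (inserted m (m k) k) / real (Kn (m k))"
proof -
  have i: "m k \<in> {1..2}"
    using spreading_run_selected[OF run k] .
  then have j: "3 - m k \<in> {1..2}" "3 - m k \<noteq> m k"
    by (auto, presburger)
  obtain c where c: "\<forall>n\<in>{1..2}.
      norm_quantum 2 Kn B k n = (real (count_before m n k) + 1) / real (Kn n) - c"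
    using norm_quantum_common_offset[OF pos run _ less_imp_le[OF k]] k by auto
  have "norm_quantum 2 Kn B (Suc k) (3 - m k) = norm_quantum 2 Kn B k (3 - m k) - norm_quantum 2 Kn B k (m k)"
    using norm_quantum_Suc_other[OF pos run k j] .
  also have "\<dots> = (real (count_before m (3 - m k) k) + 1) / real (Kn (3 - m k))
                   - (real (count_before m (m k) k) + 1) / real (Kn (m k))"
    using c i j by simp
  finally show ?thesis
    using j by (simp add: inserted_eq_count_before count_before_Suc add_divide_distrib)
qed

end
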